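(* For every integer $n\ge 1$, the number of Dumont permutations of the first kind of length $2n$ that avoid the pattern $213$ equals the Catalan number $C_{n-1}=\frac{1}{n}\binom{2n-2}{n-1}$, i.e. $|\mathfrak D^1_{2n}(213)|=C_{n-1}$.
   Context: A Dumont permutation of the first kind of length $2n$ is a permutation $\pi\in\mathfrak S_{2n}$ such that for every $i=1,\dots,2n$: if $\pi(i)$ is even then $i<2n$ and $\pi(i)>\pi(i+1)$; if $\pi(i)$ is odd then $i=2n$ or $\pi(i)<\pi(i+1)$. $\mathfrak D^1_{2n}$ denotes the set of these. A permutation $\sigma$ contains a pattern $\tau\in\mathfrak S_k$ if some subsequence $(\sigma(i_1),\dots,\sigma(i_k))$, $i_1<\dots<i_k$, is order-isomorphic to $\tau$; otherwise $\sigma$ avoids $\tau$. $\mathfrak D^1_{2n}(T)$ denotes the set of permutations in $\mathfrak D^1_{2n}$ avoiding every pattern in $T$. *)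

theory Defs
  imports Complex_Main
begin

text \<open>Permutations of {1..m} are represented as lists w (one-line notation):
  w ! i is the value pi(i+1), positions are 0-based.\<close>

definition is_perm :: "nat \<Rightarrow> nat list \<Rightarrow> bool" where
  "is_perm m w \<longleftrightarrow> length w = m \<and> distinct w \<and> set w = {1..m}"

definition dumont1 :: "nat \<Rightarrow> nat list set" where
  "dumont1 n = {w. is_perm (2*n) w \<and>
     (\<forall>i < 2*n. (even (w ! i) \<longrightarrow> i + 1 < 2*n \<and> w ! i > w ! (i+1)) \<and>
                 (odd (w ! i) \<longrightarrow> i + 1 = 2*n \<or> w ! i < w ! (i+1)))}"

definition contains :: "nat list \<Rightarrow> nat list \<Rightarrow> bool" where
  "contains sigma tau \<longleftrightarrow> (\<exists>idx :: nat \<Rightarrow> nat.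
     (\<forall>a b. a < b \<and> b < length tau \<longrightarrow> idx a < idx b) \<and>
     (\<forall>a < length tau. idx a < length sigma) \<and>
     (\<forall>a < length tau. \<forall>b < length tau.
        (sigma ! idx a < sigma ! idx b \<longleftrightarrow> tau ! a < tau ! b)))"

definition avoids :: "nat list \<Rightarrow> nat list \<Rightarrow> bool" where
  "avoids sigma tau \<longleftrightarrow> \<not> contains sigma tau"

end

theory Submission
  imports Defs
begin

text \<open>In a 213-avoiding Dumont permutation of length \<open>2n+2\<close> with \<open>n \<ge> 1\<close> the letter \<open>2n+1\<close>
  is immediately followed by \<open>2n+2\<close>; deleting this pair leaves a 213-avoiding Dumont permutation
  of length \<open>2n\<close> all of whose letters before the gap are odd. Conversely the pair may be inserted
  at any position \<open>p\<close> inside the initial run of odd letters, and the result then begins with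
  exactly \<open>p+1\<close> odd letters. So the number of such permutations beginning with at least \<open>k\<close> odd
  letters obeys the ballot recurrence, and for \<open>k = 0\<close> it is the Catalan number.\<close>

definition avoids213 :: "nat list \<Rightarrow> bool" where
  "avoids213 w \<longleftrightarrow>
     (\<forall>i j k. i < j \<longrightarrow> j < k \<longrightarrow> k < length w \<longrightarrow> \<not> (w ! j < w ! i \<and> w ! i < w ! k))"

definition dumont_step :: "nat \<Rightarrow> nat \<Rightarrow> bool" where
  "dumont_step x y \<longleftrightarrow> (if even x then y < x else x < y)"

definition dumont_word :: "nat list \<Rightarrow> bool" where
  "dumont_word w \<longleftrightarrow> successively dumont_step w \<and> (w \<noteq> [] \<longrightarrow> odd (last w))"

definition dumont213 :: "nat \<Rightarrow> nat list set" where
  "dumont213 n = {w. is_perm (2 * n) w \<and> dumont_word w \<and> avoids213 w}"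

lemma avoids_213_iff_avoids213: "avoids w [2,1,3] \<longleftrightarrow> avoids213 w"
proof
  assume "avoids w [2,1,3]"
  show "avoids213 w" unfolding avoids213_def
  proof (intro allI impI notI)
    fix i j k assume h: "i < j" "j < k" "k < length w" "w ! j < w ! i \<and> w ! i < w ! k"
    define idx where "idx = (\<lambda>x::nat. if x = 0 then i else if x = 1 then j else k)"
    have "contains w [2,1,3]" unfolding contains_def
      by (rule exI[of _ idx]) (use h in \<open>auto simp: idx_def less_Suc_eq numeral_3_eq_3\<close>)
    with \<open>avoids w [2,1,3]\<close> show False by (simp add: avoids_def)
  qed
next
  assume av: "avoids213 w"
  show "avoids w [2,1,3]" unfolding avoids_def contains_def
  proof (rule notI, elim exE conjE)
    fix idx :: "nat \<Rightarrow> nat"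
    assume mono: "\<forall>a b. a < b \<and> b < length [2::nat,1,3] \<longrightarrow> idx a < idx b"
      and bound: "\<forall>a<length [2::nat,1,3]. idx a < length w"
      and iso: "\<forall>a<length [2::nat,1,3]. \<forall>b<length [2::nat,1,3].
                  (w ! idx a < w ! idx b) = ([2::nat,1,3] ! a < [2,1,3] ! b)"
    have "idx 0 < idx 1" "idx 1 < idx 2" "idx 2 < length w" using mono bound by auto
    moreover have "w ! idx 1 < w ! idx 0" "w ! idx 0 < w ! idx 2"
      using iso[rule_format, of 1 0] iso[rule_format, of 0 2] by simp_all
    ultimately show False using av unfolding avoids213_def by blast
  qed
qed

lemma dumont_word_conv_nth:
  "dumont_word w \<longleftrightarrow>
     (\<forall>i < length w. (even (w ! i) \<longrightarrow> i + 1 < length w \<and> w ! i > w ! (i + 1)) \<and>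
                     (odd (w ! i) \<longrightarrow> i + 1 = length w \<or> w ! i < w ! (i + 1)))"
  (is "_ \<longleftrightarrow> (\<forall>i < length w. ?cond i)")
proof -
  have "(\<forall>i < length w. ?cond i) \<longleftrightarrow>
          (\<forall>i. Suc i < length w \<longrightarrow> dumont_step (w ! i) (w ! Suc i)) \<and>
          (w \<noteq> [] \<longrightarrow> odd (w ! (length w - 1)))"
  proof (rule iffI, intro conjI allI impI)
    fix i assume "\<forall>i < length w. ?cond i" "Suc i < length w"
    then show "dumont_step (w ! i) (w ! Suc i)"
      by (auto simp: dumont_step_def dest: spec[of _ i])
  next
    assume "\<forall>i < length w. ?cond i" "w \<noteq> []"
    then show "odd (w ! (length w - 1))" by (metis Suc_diff_1 Suc_eq_plus1 diff_less
      length_greater_0_conv less_irrefl zero_less_one)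
  next
    assume steps: "(\<forall>i. Suc i < length w \<longrightarrow> dumont_step (w ! i) (w ! Suc i)) \<and>
          (w \<noteq> [] \<longrightarrow> odd (w ! (length w - 1)))"
    show "\<forall>i < length w. ?cond i"
    proof (intro allI impI)
      fix i assume "i < length w"
      then consider "Suc i < length w" | "i = length w - 1" by linarith
      then show "?cond i"
        by cases (use steps \<open>i < length w\<close> in \<open>auto simp: dumont_step_def split: if_splits\<close>)
    qed
  qed
  then show ?thesis
    by (simp add: dumont_word_def successively_conv_nth last_conv_nth)
qed

lemma dumont1_avoiding_213: "{w \<in> dumont1 n. avoids w [2,1,3]} = dumont213 n"
  unfolding dumont1_def dumont213_def avoids_213_iff_avoids213
  by (auto simp: dumont_word_conv_nth is_perm_def)

lemma nth_append_Cons_shift: "(xs @ x # ys) ! (if i < length xs then i else Suc i) = (xs @ ys) ! i"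
  by (simp add: nth_append)

lemma avoids213_remove:
  assumes "avoids213 (xs @ x # ys)"
  shows "avoids213 (xs @ ys)"
  unfolding avoids213_def
proof (intro allI impI notI)
  fix i j k assume "i < j" "j < k" "k < length (xs @ ys)"
    and pattern: "(xs @ ys) ! j < (xs @ ys) ! i \<and> (xs @ ys) ! i < (xs @ ys) ! k"
  let ?shift = "\<lambda>i. if i < length xs then i else Suc i"
  have "?shift i < ?shift j" "?shift j < ?shift k" "?shift k < length (xs @ x # ys)"
    using \<open>i < j\<close> \<open>j < k\<close> \<open>k < length (xs @ ys)\<close> by auto
  then show False
    using assms[unfolded avoids213_def, rule_format, of "?shift i" "?shift j" "?shift k"] pattern
    unfolding nth_append_Cons_shift by blast
qed

lemma avoids213_insert_max_sorted:
  assumes "avoids213 (xs @ M # ys)" "\<forall>x \<in> set xs. x < M"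
  shows "sorted xs"
  unfolding sorted_iff_nth_mono_less
proof (intro allI impI leI notI)
  fix i j assume "i < j" "j < length xs" "xs ! j < xs ! i"
  moreover have "xs ! i < M" using assms(2) \<open>i < j\<close> \<open>j < length xs\<close> by simp
  ultimately show False
    using assms(1)[unfolded avoids213_def, rule_format, of i j "length xs"]
    by (simp add: nth_append)
qed

text \<open>A letter larger than all others can only play the role of the 3 in a 213 pattern.\<close>

lemma avoids213_insert_max_if:
  assumes av: "avoids213 (xs @ ys)" and sorted: "sorted xs" and max: "\<forall>x \<in> set (xs @ ys). x < M"
  shows "avoids213 (xs @ M # ys)"
  unfolding avoids213_def
proof (intro allI impI notI)
  let ?w = "xs @ M # ys" and ?p = "length xs"
  fix i j k assume ij: "i < j" and jk: "j < k" and k: "k < length ?w"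
    and pattern: "?w ! j < ?w ! i \<and> ?w ! i < ?w ! k"
  have less_M: "?w ! l < M" if "l < length ?w" "l \<noteq> ?p" for l
  proof -
    have "?w ! l \<in> set (xs @ ys)"
      using that by (auto simp: nth_append nth_Cons' split: if_splits)
    then show ?thesis using max by blast
  qed
  define unshift where "unshift l = (if l < ?p then l else l - 1)" for l
  have unshift_nth: "?w ! l = (xs @ ys) ! unshift l" if "l \<noteq> ?p" for l
    using that by (auto simp: unshift_def nth_append nth_Cons')
  have "i \<noteq> ?p" using less_M[of k] pattern ij jk k by auto
  moreover have "j \<noteq> ?p" using less_M[of i] pattern ij jk k by auto
  moreover have "k \<noteq> ?p"
  proof
    assume "k = ?p"
    then have "xs ! i \<le> xs ! j" using sorted ij jk by (simp add: sorted_iff_nth_mono_less)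
    then show False using pattern ij jk \<open>k = ?p\<close> by (simp add: nth_append)
  qed
  ultimately have "unshift i < unshift j" "unshift j < unshift k" "unshift k < length (xs @ ys)"
    using ij jk k by (auto simp: unshift_def)
  then show False
    using av[unfolded avoids213_def, rule_format, of "unshift i" "unshift j" "unshift k"] pattern
      unshift_nth \<open>i \<noteq> ?p\<close> \<open>j \<noteq> ?p\<close> \<open>k \<noteq> ?p\<close>
    by simp
qed

lemma avoids213_insert_max:
  assumes "\<forall>x \<in> set (xs @ ys). x < M"
  shows "avoids213 (xs @ M # ys) \<longleftrightarrow> avoids213 (xs @ ys) \<and> sorted xs"
proof
  assume "avoids213 (xs @ M # ys)"
  then show "avoids213 (xs @ ys) \<and> sorted xs"
    using assms by (simp add: avoids213_remove avoids213_insert_max_sorted)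
qed (use assms avoids213_insert_max_if in blast)

lemma avoids213_insert_pair:
  assumes "\<forall>x \<in> set (xs @ ys). x < a" "a < b"
  shows "avoids213 (xs @ a # b # ys) \<longleftrightarrow> avoids213 (xs @ ys) \<and> sorted xs"
proof -
  have "avoids213 ((xs @ [a]) @ b # ys) \<longleftrightarrow> avoids213 ((xs @ [a]) @ ys) \<and> sorted (xs @ [a])"
    by (intro avoids213_insert_max) (use assms in \<open>auto intro: order.strict_trans\<close>)
  moreover have "avoids213 (xs @ a # ys) \<longleftrightarrow> avoids213 (xs @ ys) \<and> sorted xs"
    using assms by (intro avoids213_insert_max) auto
  ultimately show ?thesis using assms by (auto simp: sorted_append less_imp_le)
qed

lemma dumont_word_insert_pair:
  assumes dumont: "dumont_word (xs @ ys)" and "ys \<noteq> []" and odd_xs: "\<forall>x \<in> set xs. odd x"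
    and below: "\<forall>x \<in> set (xs @ ys). x < a" and "odd a" "even b" "a < b"
  shows "dumont_word (xs @ a # b # ys)"
proof -
  have "successively dumont_step xs" "successively dumont_step ys" "odd (last ys)"
    using dumont \<open>ys \<noteq> []\<close> by (simp_all add: dumont_word_def successively_append_iff)
  moreover have "dumont_step (last xs) a" if "xs \<noteq> []"
    using that odd_xs below by (simp add: dumont_step_def)
  moreover have "hd ys < a" using below \<open>ys \<noteq> []\<close> by simp
  then have "dumont_step b (hd ys)" using \<open>even b\<close> \<open>a < b\<close> by (simp add: dumont_step_def)
  moreover have "dumont_step a b" using \<open>odd a\<close> \<open>a < b\<close> by (simp add: dumont_step_def)
  ultimately show ?thesis
    using \<open>ys \<noteq> []\<close> by (auto simp: dumont_word_def successively_append_iff successively_Cons)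
qed

lemma dumont_word_odd_prefix_sorted:
  assumes "dumont_word (xs @ ys)" "\<forall>x \<in> set xs. odd x"
  shows "sorted xs"
proof -
  have "successively dumont_step xs"
    using assms(1) by (simp add: dumont_word_def successively_append_iff)
  then have "successively (\<le>) xs"
    by (rule successively_mono) (use assms(2) in \<open>auto simp: dumont_step_def\<close>)
  then show ?thesis by (simp add: sorted_iff_nth_Suc successively_conv_nth)
qed

lemma dumont_word_sorted_prefix_odd:
  assumes "dumont_word (xs @ a # ys)" "sorted xs" "\<forall>x \<in> set xs. x < a"
  shows "\<forall>x \<in> set xs. odd x"
proof
  fix x assume "x \<in> set xs"
  then obtain i where i: "i < length xs" "x = xs ! i" by (auto simp: in_set_conv_nth)
  have steps: "successively dumont_step (xs @ [a])"
    using assms(1) by (simp add: dumont_word_def successively_append_iff successively_Cons)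
  have "dumont_step x ((xs @ [a]) ! Suc i)"
    using successively_nth[OF steps, of i] i by (simp add: nth_append)
  moreover have "x \<le> (xs @ [a]) ! Suc i"
    using i assms(2,3) by (auto simp: nth_append sorted_iff_nth_Suc less_imp_le)
  ultimately show "odd x" by (auto simp: dumont_step_def)
qed

lemma dumont_word_remove_pair:
  assumes dumont: "dumont_word (xs @ a # b # ys)" and "even b"
    and odd_xs: "\<forall>x \<in> set xs. odd x"
    and distinct: "distinct (xs @ ys)" and avoids: "avoids213 (xs @ ys)"
    and max: "M \<in> set (xs @ ys)" "even M" "\<forall>x \<in> set (xs @ ys). x \<le> M"
  shows "dumont_word (xs @ ys)"
proof -
  have "ys \<noteq> []" using dumont \<open>even b\<close> by (auto simp: dumont_word_def)
  have steps: "successively dumont_step xs" "successively dumont_step ys" "odd (last ys)"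
    using dumont \<open>ys \<noteq> []\<close>
    by (simp_all add: dumont_word_def successively_append_iff successively_Cons)
  \<comment> \<open>Otherwise \<open>last xs\<close>, \<open>hd ys\<close> and the even maximum \<open>M\<close>, which must lie further
      right in \<open>ys\<close>, form a 213 pattern.\<close>
  have ascent: "last xs < hd ys" if "xs \<noteq> []"
  proof (rule ccontr)
    assume "\<not> last xs < hd ys"
    obtain xs' x where xs: "xs = xs' @ [x]" using \<open>xs \<noteq> []\<close> by (cases xs rule: rev_cases) auto
    obtain y ys' where ys: "ys = y # ys'" using \<open>ys \<noteq> []\<close> by (cases ys) auto
    have "y < x" using \<open>\<not> last xs < hd ys\<close> distinct by (auto simp: xs ys)
    have "odd x" using odd_xs by (simp add: xs)
    then have "x < M" using max \<open>even M\<close> by (auto simp: xs intro: le_neq_implies_less)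
    have "M \<in> set ys'" using max odd_xs \<open>y < x\<close> \<open>x < M\<close> by (auto simp: ys)
    then obtain us vs where "ys' = us @ M # vs" by (meson split_list)
    then have "xs @ ys = xs' @ x # y # us @ M # vs" by (simp add: xs ys)
    then show False
      using avoids[unfolded avoids213_def, rule_format,
          of "length xs'" "Suc (length xs')" "Suc (Suc (length xs' + length us))"]
        \<open>y < x\<close> \<open>x < M\<close>
      by (simp add: nth_append)
  qed
  have "dumont_step (last xs) (hd ys)" if "xs \<noteq> []"
    using that ascent odd_xs by (simp add: dumont_step_def)
  then show ?thesis
    using steps \<open>ys \<noteq> []\<close> by (auto simp: dumont_word_def successively_append_iff)
qed

lemma is_perm_insert_top_pair:
  "is_perm (Suc (Suc m)) (xs @ Suc m # Suc (Suc m) # ys) \<longleftrightarrow> is_perm m (xs @ ys)"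
proof
  assume perm: "is_perm (Suc (Suc m)) (xs @ Suc m # Suc (Suc m) # ys)"
  then have "set (xs @ ys) = {1..Suc (Suc m)} - {Suc m, Suc (Suc m)}"
    by (auto simp: is_perm_def)
  also have "\<dots> = {1..m}" by auto
  finally show "is_perm m (xs @ ys)" using perm by (auto simp: is_perm_def)
next
  assume "is_perm m (xs @ ys)"
  then have set: "set (xs @ ys) = {1..m}" and "distinct (xs @ ys)" "length (xs @ ys) = m"
    by (simp_all add: is_perm_def)
  have "set (xs @ Suc m # Suc (Suc m) # ys) = insert (Suc m) (insert (Suc (Suc m)) (set (xs @ ys)))"
    by auto
  also have "\<dots> = {1..Suc (Suc m)}" unfolding set by auto
  finally have "set (xs @ Suc m # Suc (Suc m) # ys) = {1..Suc (Suc m)}" .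
  moreover have "Suc m \<notin> set (xs @ ys)" "Suc (Suc m) \<notin> set (xs @ ys)"
    unfolding set by auto
  ultimately show "is_perm (Suc (Suc m)) (xs @ Suc m # Suc (Suc m) # ys)"
    using \<open>distinct (xs @ ys)\<close> \<open>length (xs @ ys) = m\<close>
    by (auto simp: is_perm_def)
qed

lemma dumont213_insert_top_pair_iff:
  assumes "n \<ge> 1"
  shows "xs @ (2*n+1) # (2*n+2) # ys \<in> dumont213 (Suc n) \<longleftrightarrow>
           xs @ ys \<in> dumont213 n \<and> (\<forall>x \<in> set xs. odd x)"
proof -
  have perm_iff: "is_perm (2 * Suc n) (xs @ (2*n+1) # (2*n+2) # ys) \<longleftrightarrow> is_perm (2*n) (xs @ ys)"
    using is_perm_insert_top_pair[of "2*n" xs ys] by simp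
  show ?thesis
  proof
    assume w: "xs @ (2*n+1) # (2*n+2) # ys \<in> dumont213 (Suc n)"
    then have perm: "is_perm (2*n) (xs @ ys)" using perm_iff by (simp add: dumont213_def)
    then have set: "set (xs @ ys) = {1..2*n}" and "distinct (xs @ ys)" by (simp_all add: is_perm_def)
    then have below: "\<forall>x \<in> set (xs @ ys). x < 2*n+1" by auto
    have "avoids213 (xs @ ys)" "sorted xs"
      using w avoids213_insert_pair[of xs ys "2*n+1" "2*n+2"] below by (auto simp: dumont213_def)
    moreover have odd_xs: "\<forall>x \<in> set xs. odd x"
      using w \<open>sorted xs\<close> below
      by (intro dumont_word_sorted_prefix_odd[of xs "2*n+1" "(2*n+2) # ys"])
         (auto simp: dumont213_def)
    moreover have "dumont_word (xs @ ys)"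
      using w odd_xs \<open>distinct (xs @ ys)\<close> \<open>avoids213 (xs @ ys)\<close> set assms
      by (intro dumont_word_remove_pair[of xs "2*n+1" "2*n+2" ys "2*n"]) (auto simp: dumont213_def)
    ultimately show "xs @ ys \<in> dumont213 n \<and> (\<forall>x \<in> set xs. odd x)"
      using perm by (simp add: dumont213_def)
  next
    assume "xs @ ys \<in> dumont213 n \<and> (\<forall>x \<in> set xs. odd x)"
    then have v: "is_perm (2*n) (xs @ ys)" "dumont_word (xs @ ys)" "avoids213 (xs @ ys)"
      and odd_xs: "\<forall>x \<in> set xs. odd x" by (simp_all add: dumont213_def)
    have set: "set (xs @ ys) = {1..2*n}" using v(1) by (simp add: is_perm_def)
    have "2*n \<in> set (xs @ ys)" using set assms by simp
    then have "2*n \<in> set ys" using odd_xs by auto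
    then have "ys \<noteq> []" by auto
    have "sorted xs" using v(2) odd_xs by (rule dumont_word_odd_prefix_sorted)
    then have "avoids213 (xs @ (2*n+1) # (2*n+2) # ys)"
      using avoids213_insert_pair[of xs ys "2*n+1" "2*n+2"] set v(3) by auto
    moreover have "dumont_word (xs @ (2*n+1) # (2*n+2) # ys)"
      using v(2) \<open>ys \<noteq> []\<close> odd_xs set by (intro dumont_word_insert_pair) auto
    ultimately show "xs @ (2*n+1) # (2*n+2) # ys \<in> dumont213 (Suc n)"
      using v(1) perm_iff by (simp add: dumont213_def)
  qed
qed

lemma dumont213_top_pair_adjacent:
  assumes "n \<ge> 1" and w: "w \<in> dumont213 (Suc n)"
  obtains xs ys where "w = xs @ (2*n+1) # (2*n+2) # ys"
proof -
  have perm: "is_perm (2*n+2) w" and dumont: "dumont_word w" and avoids: "avoids213 w"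
    using w by (simp_all add: dumont213_def)
  then have set: "set w = {1..2*n+2}" by (simp add: is_perm_def)
  have steps: "dumont_step (w ! i) (w ! Suc i)" if "Suc i < length w" for i
    using dumont that by (simp add: dumont_word_def successively_nth)
  have "2*n+1 \<in> set w" "2 \<in> set w" using set assms by auto
  then obtain p t where p: "p < length w" "w ! p = 2*n+1" and t: "t < length w" "w ! t = 2"
    by (auto simp: in_set_conv_nth)
  \<comment> \<open>If \<open>2n+1\<close> were the last letter, the descent from 2 to 1 would precede it: a 213.\<close>
  have "Suc p < length w"
  proof (rule ccontr)
    assume "\<not> Suc p < length w"
    have "t \<noteq> p" using t p assms by auto
    then have "Suc t < length w" using t p \<open>\<not> Suc p < length w\<close> by simp
    then have "w ! Suc t < 2" using steps[of t] t by (simp add: dumont_step_def)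
    moreover have "w ! Suc t \<in> set w" using \<open>Suc t < length w\<close> by simp
    ultimately have "w ! Suc t = 1" using set by auto
    then have "Suc t < p" using \<open>Suc t < length w\<close> \<open>\<not> Suc p < length w\<close> p assms
      by (cases "Suc t = p") auto
    then show False
      using avoids[unfolded avoids213_def, rule_format, of t "Suc t" p] t p \<open>w ! Suc t = 1\<close> assms
      by auto
  qed
  then have "w ! Suc p = 2*n+2"
    using steps[of p] p set nth_mem[of "Suc p" w] by (auto simp: dumont_step_def)
  then have "w = take p w @ (2*n+1) # (2*n+2) # drop (Suc (Suc p)) w"
    using p \<open>Suc p < length w\<close> by (metis Cons_nth_drop_Suc Suc_lessD append_take_drop_id)
  then show ?thesis by (rule that)
qed

definition leading_odds :: "nat list \<Rightarrow> nat" where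
  "leading_odds w = length (takeWhile odd w)"

lemma leading_odds_insert_pair:
  "\<forall>x \<in> set xs. odd x \<Longrightarrow> odd a \<Longrightarrow> even b \<Longrightarrow> leading_odds (xs @ a # b # ys) = Suc (length xs)"
  by (simp add: leading_odds_def)

lemma leading_odds_ge_iff: "k \<le> leading_odds w \<longleftrightarrow> k \<le> length w \<and> (\<forall>x \<in> set (take k w). odd x)"
proof
  assume "k \<le> leading_odds w"
  moreover have "takeWhile odd w = take (leading_odds w) w"
    unfolding leading_odds_def by (rule takeWhile_eq_take)
  ultimately show "k \<le> length w \<and> (\<forall>x \<in> set (take k w). odd x)"
    unfolding leading_odds_def
    by (metis in_set_takeD length_takeWhile_le min.absorb1 order.trans set_takeWhileD take_take)
next
  assume "k \<le> length w \<and> (\<forall>x \<in> set (take k w). odd x)"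
  then have "takeWhile odd w = take k w @ takeWhile odd (drop k w)"
    by (metis append_take_drop_id takeWhile_append2)
  then show "k \<le> leading_odds w"
    using \<open>k \<le> length w \<and> _\<close> by (simp add: leading_odds_def)
qed

definition dumont213_odd_prefix :: "nat \<Rightarrow> nat \<Rightarrow> nat list set" where
  "dumont213_odd_prefix n k = {w \<in> dumont213 n. k \<le> leading_odds w}"

lemma finite_dumont213_odd_prefix: "finite (dumont213_odd_prefix n k)"
proof (rule finite_subset)
  show "dumont213_odd_prefix n k \<subseteq> {w. set w \<subseteq> {1..2*n} \<and> length w = 2*n}"
    by (auto simp: dumont213_odd_prefix_def dumont213_def is_perm_def)
  show "finite {w. set w \<subseteq> {1..2*n} \<and> length w = 2*n}"
    by (rule finite_lists_length_eq) simp
qed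

lemma dumont213_odd_prefix_0:
  assumes "n \<ge> 1"
  shows "dumont213_odd_prefix (Suc n) 0 = dumont213_odd_prefix (Suc n) 1"
proof -
  have "1 \<le> leading_odds w" if w: "w \<in> dumont213 (Suc n)" for w
  proof -
    obtain xs ys where xs_ys: "w = xs @ (2*n+1) # (2*n+2) # ys"
      using dumont213_top_pair_adjacent[OF assms w] .
    then have "\<forall>x \<in> set xs. odd x"
      using dumont213_insert_top_pair_iff[OF assms] w by blast
    then show ?thesis by (simp add: xs_ys leading_odds_insert_pair)
  qed
  then show ?thesis by (auto simp: dumont213_odd_prefix_def)
qed

lemma dumont213_leading_odds_eq_image:
  assumes "n \<ge> 1"
  shows "{w \<in> dumont213 (Suc n). leading_odds w = Suc q} =
           (\<lambda>v. take q v @ (2*n+1) # (2*n+2) # drop q v) ` dumont213_odd_prefix n q"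
proof (intro equalityI subsetI)
  fix w assume "w \<in> {w \<in> dumont213 (Suc n). leading_odds w = Suc q}"
  then have w: "w \<in> dumont213 (Suc n)" "leading_odds w = Suc q" by simp_all
  obtain xs ys where xs_ys: "w = xs @ (2*n+1) # (2*n+2) # ys"
    using dumont213_top_pair_adjacent[OF assms w(1)] .
  then have v: "xs @ ys \<in> dumont213 n" and odd_xs: "\<forall>x \<in> set xs. odd x"
    using dumont213_insert_top_pair_iff[OF assms] w(1) by blast+
  have "length xs = q" using w(2) odd_xs by (simp add: xs_ys leading_odds_insert_pair)
  then have "q \<le> leading_odds (xs @ ys)" using odd_xs by (simp add: leading_odds_ge_iff)
  with v have "xs @ ys \<in> dumont213_odd_prefix n q" by (simp add: dumont213_odd_prefix_def)
  moreover have "w = take q (xs @ ys) @ (2*n+1) # (2*n+2) # drop q (xs @ ys)"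
    using \<open>length xs = q\<close> by (simp add: xs_ys)
  ultimately show "w \<in> (\<lambda>v. take q v @ (2*n+1) # (2*n+2) # drop q v) ` dumont213_odd_prefix n q"
    by blast
next
  fix w assume "w \<in> (\<lambda>v. take q v @ (2*n+1) # (2*n+2) # drop q v) ` dumont213_odd_prefix n q"
  then obtain v where v: "v \<in> dumont213 n" "q \<le> leading_odds v"
    and w: "w = take q v @ (2*n+1) # (2*n+2) # drop q v"
    by (auto simp: dumont213_odd_prefix_def)
  then have "q \<le> length v" and odd_xs: "\<forall>x \<in> set (take q v). odd x"
    by (simp_all add: leading_odds_ge_iff)
  then have "w \<in> dumont213 (Suc n)"
    using dumont213_insert_top_pair_iff[OF assms, of "take q v" "drop q v"] v by (simp add: w)
  moreover have "leading_odds w = Suc q"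
    using odd_xs \<open>q \<le> length v\<close> by (simp add: w leading_odds_insert_pair)
  ultimately show "w \<in> {w \<in> dumont213 (Suc n). leading_odds w = Suc q}" by simp
qed

lemma card_dumont213_odd_prefix_Suc:
  assumes "n \<ge> 1"
  shows "card (dumont213_odd_prefix (Suc n) (Suc q)) =
           card (dumont213_odd_prefix n q) + card (dumont213_odd_prefix (Suc n) (Suc (Suc q)))"
proof -
  define E where "E = {w \<in> dumont213 (Suc n). leading_odds w = Suc q}"
  have "inj_on (\<lambda>v. take q v @ (2*n+1) # (2*n+2) # drop q v) (dumont213_odd_prefix n q)"
    by (rule inj_on_inverseI[where g = "\<lambda>w. take q w @ drop (Suc (Suc q)) w"])
       (simp add: dumont213_odd_prefix_def leading_odds_ge_iff)
  then have "card E = card (dumont213_odd_prefix n q)"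
    unfolding E_def dumont213_leading_odds_eq_image[OF assms] by (rule card_image)
  moreover have "finite E"
    unfolding E_def dumont213_leading_odds_eq_image[OF assms]
    by (intro finite_imageI finite_dumont213_odd_prefix)
  moreover have "dumont213_odd_prefix (Suc n) (Suc q) = E \<union> dumont213_odd_prefix (Suc n) (Suc (Suc q))"
    by (auto simp: E_def dumont213_odd_prefix_def)
  moreover have "E \<inter> dumont213_odd_prefix (Suc n) (Suc (Suc q)) = {}"
    by (auto simp: E_def dumont213_odd_prefix_def)
  ultimately show ?thesis by (simp add: card_Un_disjoint finite_dumont213_odd_prefix)
qed

lemma dumont213_1: "dumont213 1 = {[2,1]}"
proof
  show "dumont213 1 \<subseteq> {[2,1]}"
  proof
    fix w assume "w \<in> dumont213 1"
    then have perm: "is_perm 2 w" and dumont: "dumont_word w" by (simp_all add: dumont213_def)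
    then obtain x y where w: "w = [x, y]"
      by (auto simp: is_perm_def numeral_2_eq_2 length_Suc_conv)
    have "x \<in> {1..2}" "y \<in> {1..2}" "x \<noteq> y" using perm by (auto simp: is_perm_def w)
    moreover have "odd y" using dumont by (simp add: dumont_word_def w)
    ultimately have "y = 1" "x = 2" by (auto simp: le_Suc_eq numeral_2_eq_2)
    then show "w \<in> {[2,1]}" by (simp add: w)
  qed
  have "set [2::nat, 1] = {1..2}" by auto
  moreover have "avoids213 [2,1]" by (auto simp: avoids213_def)
  ultimately show "{[2,1]} \<subseteq> dumont213 1"
    by (simp add: dumont213_def is_perm_def dumont_word_def dumont_step_def)
qed

definition ballot :: "nat \<Rightarrow> nat \<Rightarrow> int" where
  "ballot m r = (if r \<le> m then int (2*m - r choose m) - int (2*m - r choose Suc m) else 0)"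

lemma ballot_Suc_Suc: "ballot (Suc m) (Suc q) = ballot m q + ballot (Suc m) (Suc (Suc q))"
proof (cases "q < m")
  case True
  then have "2 * Suc m - Suc q = Suc (2*m - q)" "2 * Suc m - Suc (Suc q) = 2*m - q" by simp_all
  then show ?thesis using True by (simp add: ballot_def)
next
  case False
  then show ?thesis by (cases "q = m") (simp_all add: ballot_def binomial_eq_0)
qed

lemma ballot_Suc_0: "ballot (Suc m) 0 = ballot (Suc m) 1"
proof -
  have "Suc (2*m) choose m = Suc (2*m) choose Suc m"
    using binomial_symmetric[of m "Suc (2*m)"] by simp
  then show ?thesis by (simp add: ballot_def)
qed

lemma card_dumont213_odd_prefix: "int (card (dumont213_odd_prefix (Suc m) k)) = ballot m k"
proof (induction m arbitrary: k)
  case 0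
  show ?case
    by (cases k)
      (simp_all add: dumont213_odd_prefix_def dumont213_1[unfolded One_nat_def] ballot_def
        leading_odds_def)
next
  case (Suc m)
  have large: "int (card (dumont213_odd_prefix (Suc (Suc m)) k)) = ballot (Suc m) k"
    if "2*m + 5 \<le> k" for k
  proof -
    have "leading_odds w < k" if "w \<in> dumont213 (Suc (Suc m))" for w
      using that \<open>2*m + 5 \<le> k\<close> length_takeWhile_le[of odd w]
      by (simp add: dumont213_def is_perm_def leading_odds_def)
    then have "dumont213_odd_prefix (Suc (Suc m)) k = {}"
      by (auto simp: dumont213_odd_prefix_def not_le[symmetric])
    then show ?thesis using that by (simp add: ballot_def)
  qed
  \<comment> \<open>downward induction on \<open>k\<close>, starting beyond the length \<open>2m+4\<close>\<close>
  show ?case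
  proof (cases "k \<le> 2*m + 5")
    case True
    then show ?thesis
    proof (induction k rule: inc_induct)
      case base
      then show ?case by (rule large) simp
    next
      case (step k)
      show ?case
      proof (cases k)
        case 0
        then show ?thesis using step.IH dumont213_odd_prefix_0[of "Suc m"] ballot_Suc_0 by simp
      next
        case (Suc q)
        then show ?thesis using step.IH Suc.IH[of q] card_dumont213_odd_prefix_Suc[of "Suc m" q]
            ballot_Suc_Suc[of m q] by simp
      qed
    qed
  qed (simp add: large)
qed

lemma catalan_binomial_diff:
  "real (2*m choose m) - real (2*m choose Suc m) = real (2*m choose m) / real (Suc m)"
proof -
  have "Suc m * (2*m choose Suc m) = 2*m * (2*m - 1 choose m)" by (rule binomial_absorption)
  also have "\<dots> = (2*m - m) * (2*m choose m)" by (rule binomial_absorb_comp[symmetric])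
  finally have "real (Suc m) * real (2*m choose Suc m) = real m * real (2*m choose m)"
    by (metis diff_add_inverse2 mult_2 of_nat_mult)
  then show ?thesis by (simp add: field_simps)
qed

theorem theorem2p1:
  fixes n :: nat
  assumes "n \<ge> 1"
  shows "real (card {w \<in> dumont1 n. avoids w [2,1,3]})
           = (1 / real n) * real ((2*n - 2) choose (n - 1))"
proof -
  obtain m where n: "n = Suc m" using assms by (cases n) auto
  have "{w \<in> dumont1 n. avoids w [2,1,3]} = dumont213_odd_prefix (Suc m) 0"
    unfolding dumont1_avoiding_213 by (simp add: n dumont213_odd_prefix_def)
  then have "int (card {w \<in> dumont1 n. avoids w [2,1,3]}) = int (2*m choose m) - int (2*m choose Suc m)"
    using card_dumont213_odd_prefix[of m 0] by (simp add: ballot_def)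
  then have "real (card {w \<in> dumont1 n. avoids w [2,1,3]}) = real (2*m choose m) - real (2*m choose Suc m)"
    by linarith
  also have "\<dots> = real (2*m choose m) / real (Suc m)" by (rule catalan_binomial_diff)
  also have "\<dots> = (1 / real n) * real ((2*n - 2) choose (n - 1))" by (simp add: n)
  finally show ?thesis .
qed

end
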